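(* For all integers $v\geq 1$ and $r\geq 1$, $$\sum_{i=1}^{2v-2}2^{i-1}\binom{2r+i-1}{i}\sigma(2v-i,2r+i)+2^{2v-1}\sum_{j=0}^{2r-2}(-1)^j\binom{2v+j-1}{j}\lambda(2v+j)\lambda(2r-j)$$ $$-2^{2v-3}\binom{2v+2r-2}{2v-1}(2v+2r-1)\lambda(2v+2r)+2^{2v-2}\binom{2v+2r-2}{2v-1}\sum_{j=1}^{r+v-2}\lambda(2j+1)\lambda(2r+2v-2j-1)=0,$$ where an empty sum equals $0$.
   Context: For integers $t\geq 1$, $n\geq 1$ let $S_n^{(t)}=\sum_{k=1}^{n}\frac{1}{(2k-1)^t}$, and for integers $s\geq 2$, $t\geq 1$ let $\sigma(s,t)=\sum_{n\geq 1}\frac{S_n^{(t)}}{n^s}$. For real $s>1$, $\lambda(s)=\sum_{n\geq 1}\frac{1}{(2n-1)^s}$. *)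

theory Defs
  imports "HOL-Analysis.Analysis"
begin

definition Sodd :: "nat \<Rightarrow> nat \<Rightarrow> real" where
  "Sodd n t = (\<Sum>k=1..n. 1 / (2 * real k - 1) ^ t)"

definition sigma_odd :: "nat \<Rightarrow> nat \<Rightarrow> real" where
  "sigma_odd s t = (\<Sum>n. Sodd (Suc n) t / real (Suc n) ^ s)"

definition dlambda :: "real \<Rightarrow> real" where
  "dlambda s = (\<Sum>n. 1 / (2 * real n + 1) powr s)"

end

theory Submission
  imports Defs
begin

text \<open>
  For odd \<open>x, y > 0\<close> and even \<open>p, q\<close>, substituting \<open>a = -y/x\<close>, \<open>b = (x+y)/x\<close> into the
  negative binomial identity
  \<open>\<Sum>i<q. C(p-1+i, i) a^p b^i + \<Sum>j<p. C(q-1+j, j) a^j b^q = 1\<close> (valid whenever \<open>a + b = 1\<close>)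
  and multiplying by \<open>1/(y^p (x+y)^q)\<close> expands \<open>1/(y^p (x+y)^q)\<close> into the terms
  \<open>1/(x^(p+i) (x+y)^(q-i))\<close>, \<open>1/(x^(q+j) y^(p-j))\<close> and \<open>1/(x^(p+q-2) y (x+y))\<close>.
  Summed over all pairs of odd numbers, the left-hand side and the term \<open>i = 0\<close> are the same
  double series with \<open>x\<close> and \<open>y\<close> interchanged and cancel. The other terms give
  \<open>\<sigma>(q-i, p+i)/2^(q-i)\<close>, products \<open>\<lambda>(q+j) \<lambda>(p-j)\<close>, and a Tornheim-type series
  \<open>\<Sum> 1/(x^N y (x+y))\<close> which, symmetrised in \<open>x, y\<close>, becomes the alternating sum
  \<open>\<Sum>k. (-1)^k \<lambda>(N-k) \<lambda>(k+2)\<close>. Its even part is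
  \<open>\<Sum>i<n. \<lambda>(2(n-i)) \<lambda>(2i+2) = (2n+1)/2 \<lambda>(2n+2)\<close>: summing the geometric series
  \<open>\<Sum>i. x^(-2(n-i)) y^(-2i-2)\<close> leaves \<open>1/(x^(2n) (y^2-x^2))\<close> off the diagonal, and
  \<open>\<Sum>y\<noteq>x. 1/(y^2-x^2) = 1/(4x^2)\<close> telescopes.
\<close>

section \<open>Algebraic identities\<close>

lemma choose_add_swap: "(m + n) choose m = (m + n) choose n"
  using binomial_symmetric[of m "m + n"] by simp

lemma negative_binomial_tail_mult:
  fixes a :: "'a::comm_ring_1"
  assumes q: "q \<ge> 1"
  shows "(1 - a) * (\<Sum>j<p. of_nat ((q + j) choose j) * a ^ j)
       = (\<Sum>j<p. of_nat ((q - 1 + j) choose j) * a ^ j) - of_nat ((p + q - 1) choose q) * a ^ p"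
proof (induction p)
  case 0
  show ?case using q by (simp add: binomial_eq_0)
next
  case (Suc p)
  obtain k where k: "q = Suc k" using q by (cases q) auto
  have pascal: "(q + p) choose p = ((q - 1 + p) choose p) + ((p + q - 1) choose q)"
  proof (cases p)
    case (Suc p')
    have "p' + Suc k = Suc (k + p')" by simp
    then have "Suc (k + p') choose p' = Suc (k + p') choose Suc k"
      using choose_add_swap[of p' "Suc k"] by argo
    with Suc k show ?thesis by simp (metis add.commute)
  qed (use k in simp)
  have shift: "(Suc p + q - 1) choose q = (q + p) choose p"
    using choose_add_swap[of q p] by (simp add: k add.commute)
  have "(1 - a) * (\<Sum>j<Suc p. of_nat ((q + j) choose j) * a ^ j)
      = (1 - a) * (\<Sum>j<p. of_nat ((q + j) choose j) * a ^ j)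
        + (1 - a) * of_nat ((q + p) choose p) * a ^ p"
    by (simp add: algebra_simps)
  also have "\<dots> = (\<Sum>j<p. of_nat ((q - 1 + j) choose j) * a ^ j) - of_nat ((p + q - 1) choose q) * a ^ p
        + (1 - a) * (of_nat ((q - 1 + p) choose p) + of_nat ((p + q - 1) choose q)) * a ^ p"
    unfolding Suc.IH pascal by simp
  also have "\<dots> = (\<Sum>j<Suc p. of_nat ((q - 1 + j) choose j) * a ^ j)
        - of_nat ((Suc p + q - 1) choose q) * a ^ Suc p"
    unfolding shift pascal by (simp add: algebra_simps)
  finally show ?case .
qed

lemma negative_binomial_tails_sum:
  fixes a b :: "'a::comm_ring_1"
  assumes ab: "a + b = 1" and p: "p \<ge> 1" and q: "q \<ge> 1"
  shows "(\<Sum>i<q. of_nat ((p - 1 + i) choose i) * a ^ p * b ^ i)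
       + (\<Sum>j<p. of_nat ((q - 1 + j) choose j) * a ^ j * b ^ q) = 1"
proof -
  have b: "b = 1 - a" using ab by (metis add_diff_cancel_left')
  show ?thesis
    using q
  proof (induction q rule: dec_induct)
    case base
    have "(\<Sum>j<p. a ^ j * (1 - a)) = 1 - a ^ p"
      by (metis one_diff_power_eq mult.commute sum_distrib_right)
    then show ?case
      by (simp add: b)
  next
    case (step q)
    define E where "E = of_nat ((p + q - 1) choose q) * a ^ p * b ^ q"
    have "p - 1 + q = p + q - 1" using p by simp
    then have first: "(\<Sum>i<Suc q. of_nat ((p - 1 + i) choose i) * a ^ p * b ^ i)
        = (\<Sum>i<q. of_nat ((p - 1 + i) choose i) * a ^ p * b ^ i) + E"
      by (simp add: E_def)
    have "(\<Sum>j<p. of_nat ((Suc q - 1 + j) choose j) * a ^ j * b ^ Suc q)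
        = b ^ q * ((1 - a) * (\<Sum>j<p. of_nat ((q + j) choose j) * a ^ j))"
      by (simp add: b sum_distrib_left algebra_simps)
    also have "\<dots> = (\<Sum>j<p. of_nat ((q - 1 + j) choose j) * a ^ j * b ^ q) - E"
      unfolding negative_binomial_tail_mult[OF step.hyps(1)] E_def
      by (simp add: sum_distrib_left algebra_simps)
    finally have second: "(\<Sum>j<p. of_nat ((Suc q - 1 + j) choose j) * a ^ j * b ^ Suc q)
        = (\<Sum>j<p. of_nat ((q - 1 + j) choose j) * a ^ j * b ^ q) - E" .
    show ?case
      using step.IH unfolding first second by (simp add: algebra_simps)
  qed
qed

lemma partial_fractions_power:
  fixes x y :: "'a::field"
  assumes x: "x \<noteq> 0" and y: "y \<noteq> 0" and xy: "x + y \<noteq> 0" and p: "p \<ge> 1" and q: "q \<ge> 1"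
  shows "1 / (y ^ p * (x + y) ^ q)
       = (-1) ^ p * (\<Sum>i<q. of_nat ((p - 1 + i) choose i) / (x ^ (p + i) * (x + y) ^ (q - i)))
         + (\<Sum>j<p. (-1) ^ j * of_nat ((q - 1 + j) choose j) / (x ^ (q + j) * y ^ (p - j)))"
proof -
  define z where "z = x + y"
  have z: "z \<noteq> 0" using xy by (simp add: z_def)
  define K where "K = 1 / (y ^ p * z ^ q)"
  have "(- y / x) + z / x = 1" using x by (simp add: z_def field_simps)
  note one = negative_binomial_tails_sum[OF this p q]
  have first: "of_nat c * (- y / x) ^ p * (z / x) ^ i * K = (-1) ^ p * (of_nat c / (x ^ (p + i) * z ^ (q - i)))"
    if "i < q" for i c
    using that x y z power_diff[OF z, of i q]
    by (simp add: K_def power_divide power_minus' power_add field_simps)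
  have second: "of_nat c * (- y / x) ^ j * (z / x) ^ q * K = (-1) ^ j * of_nat c / (x ^ (q + j) * y ^ (p - j))"
    if "j < p" for j c
    using that x y z power_diff[OF y, of j p]
    by (simp add: K_def power_divide power_minus' power_add field_simps)
  have "K = K * ((\<Sum>i<q. of_nat ((p - 1 + i) choose i) * (- y / x) ^ p * (z / x) ^ i)
      + (\<Sum>j<p. of_nat ((q - 1 + j) choose j) * (- y / x) ^ j * (z / x) ^ q))"
    unfolding one by simp
  also have "\<dots> = (\<Sum>i<q. of_nat ((p - 1 + i) choose i) * (- y / x) ^ p * (z / x) ^ i * K)
      + (\<Sum>j<p. of_nat ((q - 1 + j) choose j) * (- y / x) ^ j * (z / x) ^ q * K)"
    by (simp add: distrib_left sum_distrib_left mult.commute)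
  also have "\<dots> = (\<Sum>i<q. (-1) ^ p * (of_nat ((p - 1 + i) choose i) / (x ^ (p + i) * z ^ (q - i))))
      + (\<Sum>j<p. (-1) ^ j * of_nat ((q - 1 + j) choose j) / (x ^ (q + j) * y ^ (p - j)))"
    by (intro arg_cong2[where f = "(+)"] sum.cong refl first second) auto
  finally show ?thesis by (simp add: K_def z_def sum_distrib_left)
qed

lemma partial_fractions_even_power:
  fixes x y :: "'a::field"
  assumes x: "x \<noteq> 0" and y: "y \<noteq> 0" and xy: "x + y \<noteq> 0"
    and p: "even p" "p \<ge> 2" and q: "q \<ge> 2"
  shows "1 / (y ^ p * (x + y) ^ q) - 1 / (x ^ p * (x + y) ^ q)
       = (\<Sum>i=1..q-2. of_nat ((p - 1 + i) choose i) / (x ^ (p + i) * (x + y) ^ (q - i)))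
         + (\<Sum>j=0..p-2. (-1) ^ j * of_nat ((q - 1 + j) choose j) / (x ^ (q + j) * y ^ (p - j)))
         - of_nat ((p + q - 2) choose (q - 1)) / (x ^ (p + q - 2) * y * (x + y))"
proof -
  define T where "T i = of_nat ((p - 1 + i) choose i) / (x ^ (p + i) * (x + y) ^ (q - i))" for i
  define U where "U j = (-1) ^ j * of_nat ((q - 1 + j) choose j) / (x ^ (q + j) * y ^ (p - j))" for j
  obtain m where m: "q = Suc (Suc m)" using q by (metis add_2_eq_Suc le_Suc_ex)
  obtain k where k: "p = Suc (Suc k)" using p by (metis add_2_eq_Suc le_Suc_ex)
  have "(\<Sum>i<Suc m. T i) = T 0 + (\<Sum>i=1..m. T i)"
    by (simp only: sum.lessThan_Suc_shift sum.atLeast1_atMost_eq One_nat_def)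
  then have split_T: "(\<Sum>i<q. T i) = T 0 + (\<Sum>i=1..q-2. T i) + T (q - 1)"
    by (simp add: m)
  have split_U: "(\<Sum>j<p. U j) = (\<Sum>j=0..p-2. U j) + U (p - 1)"
    by (simp add: k atLeast0AtMost lessThan_Suc_atMost[symmetric])
  define N where "N = p + q - 2"
  define C :: 'a where "C = of_nat (N choose (q - 1))"
  have N_eq: "q - 1 + (p - 1) = N" "p - 1 + (q - 1) = N"
    by (simp_all add: N_def k m)
  have binom: "(q - 1 + (p - 1)) choose (p - 1) = N choose (q - 1)"
      "(p - 1 + (q - 1)) choose (q - 1) = N choose (q - 1)"
    using choose_add_swap[of "q - 1" "p - 1"] unfolding N_eq by simp_all
  have exps: "x ^ (p + (q - 1)) = x ^ N * x" "x ^ (q + (p - 1)) = x ^ N * x"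
      "q - (q - 1) = 1" "p - (p - 1) = 1"
    by (simp_all add: N_def k m ac_simps)
  have sign: "(-1 :: 'a) ^ (p - 1) = -1" using p by (simp add: k)
  have "T (q - 1) + U (p - 1) = C * (1 / (x ^ N * x * (x + y)) - 1 / (x ^ N * x * y))"
    unfolding T_def U_def binom exps sign C_def by (simp add: right_diff_distrib)
  also have "1 / (x ^ N * x * (x + y)) - 1 / (x ^ N * x * y) = 1 / (x ^ N * x) * (1 / (x + y) - 1 / y)"
    by (simp add: right_diff_distrib)
  also have "1 / (x + y) - 1 / y = - x / ((x + y) * y)"
    using y xy by (simp add: diff_frac_eq)
  also have "1 / (x ^ N * x) * (- x / ((x + y) * y)) = - (1 / (x ^ N * y * (x + y)))"
    using x by (simp add: ac_simps)
  finally have last: "T (q - 1) + U (p - 1) = - C / (x ^ N * y * (x + y))"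
    by simp
  have "1 / (y ^ p * (x + y) ^ q) = (\<Sum>i<q. T i) + (\<Sum>j<p. U j)"
    using partial_fractions_power[OF x y xy, of p q] p q by (simp add: T_def U_def)
  moreover have "T 0 = 1 / (x ^ p * (x + y) ^ q)" by (simp add: T_def)
  ultimately show ?thesis
    unfolding split_T split_U using last by (simp add: T_def U_def C_def N_def algebra_simps)
qed

lemma partial_fractions_symmetric:
  fixes x y :: "'a::field"
  assumes x: "x \<noteq> 0" and y: "y \<noteq> 0" and xy: "x + y \<noteq> 0" and N: "even N" "N \<ge> 2"
  shows "1 / (x ^ N * y * (x + y)) + 1 / (y ^ N * x * (x + y))
       = (\<Sum>k<N - 1. (-1) ^ k / (x ^ (N - k) * y ^ (k + 2)))"
proof -
  obtain n where n: "N = Suc (Suc n)" using N(2) by (metis add_2_eq_Suc le_Suc_ex)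
  have "even n" using N(1) by (simp add: n)
  then have factor: "x ^ Suc n + y ^ Suc n = (x + y) * (\<Sum>k<Suc n. x ^ k * (-y) ^ (n - k))"
    using diff_power_eq_sum[of x n "-y"] by simp
  have summand: "x ^ k * (-y) ^ (n - k) / (x ^ N * y ^ N) = (-1) ^ k / (x ^ (N - k) * y ^ (k + 2))"
    if "k < Suc n" for k
  proof -
    have "(-1 :: 'a) ^ (n - k) = (-1) ^ k"
      using that \<open>even n\<close> by (simp add: minus_one_power_iff even_diff_nat)
    moreover have "x ^ N = x ^ k * x ^ (N - k)" "y ^ N = y ^ (n - k) * y ^ (k + 2)"
      using that by (simp_all add: n flip: power_add)
    ultimately show ?thesis
      using x y by (simp add: power_minus')
  qed
  have "1 / (x ^ N * y * z) + 1 / (y ^ N * x * z) = (x ^ Suc n + y ^ Suc n) / (x ^ N * y ^ N * z)"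
    if "z \<noteq> 0" for z
    using x y that by (simp add: n field_simps)
  then have "1 / (x ^ N * y * (x + y)) + 1 / (y ^ N * x * (x + y)) = (x ^ Suc n + y ^ Suc n) / (x ^ N * y ^ N * (x + y))"
    using xy .
  also have "\<dots> = (\<Sum>k<Suc n. x ^ k * (-y) ^ (n - k)) / (x ^ N * y ^ N)"
    unfolding factor using xy by (simp del: sum.lessThan_Suc)
  also have "\<dots> = (\<Sum>k<Suc n. x ^ k * (-y) ^ (n - k) / (x ^ N * y ^ N))"
    by (rule sum_divide_distrib)
  also have "\<dots> = (\<Sum>k<N - 1. (-1) ^ k / (x ^ (N - k) * y ^ (k + 2)))"
    using summand by (simp add: n)
  finally show ?thesis .
qed

lemma sum_power_mult_power_eq:
  fixes X Y :: "'a::field"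
  assumes X: "X \<noteq> 0" and Y: "Y \<noteq> 0" and XY: "X \<noteq> Y"
  shows "(\<Sum>i<n. X ^ (n - i) * Y ^ (i + 1)) = X ^ n / (1 / Y - 1 / X) + Y ^ n / (1 / X - 1 / Y)"
proof -
  have "(\<Sum>i<n. X ^ (n - i) * Y ^ (i + 1)) = X * Y * (\<Sum>i<n. X ^ (n - Suc i) * Y ^ i)"
    unfolding sum_distrib_left
  proof (intro sum.cong refl)
    fix i assume "i \<in> {..<n}"
    then have "n - i = Suc (n - Suc i)" by simp
    then show "X ^ (n - i) * Y ^ (i + 1) = X * Y * (X ^ (n - Suc i) * Y ^ i)" by simp
  qed
  also have "\<dots> = X * Y * (Y ^ n - X ^ n) / (Y - X)"
    using XY power_diff_sumr2[of Y n X] by simp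
  also have "\<dots> = (Y ^ n - X ^ n) / (1 / X - 1 / Y)"
    using X Y by (simp add: diff_frac_eq)
  also have "\<dots> = X ^ n / (1 / Y - 1 / X) + Y ^ n / (1 / X - 1 / Y)"
    by (metis diff_divide_distrib minus_diff_eq minus_divide_right uminus_add_conv_diff)
  finally show ?thesis .
qed

text \<open>On the diagonal \<open>x^2 = y^2\<close> the first two summands are the junk values \<open>1 / 0 = 0\<close>.\<close>

lemma sum_inverse_square_powers:
  fixes x y :: "'a::field"
  assumes x: "x \<noteq> 0" and y: "y \<noteq> 0"
  shows "(\<Sum>i<n. 1 / (x ^ (2 * (n - i)) * y ^ (2 * i + 2)))
       = 1 / (x ^ (2 * n) * (y ^ 2 - x ^ 2)) + 1 / (y ^ (2 * n) * (x ^ 2 - y ^ 2))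
         + (if x ^ 2 = y ^ 2 then of_nat n / x ^ (2 * n + 2) else 0)"
proof (cases "x ^ 2 = y ^ 2")
  case True
  have "x ^ (2 * (n - i)) * y ^ (2 * i + 2) = x ^ (2 * n + 2)" if "i < n" for i
  proof -
    have "2 * i + 2 = 2 * (i + 1)" "2 * n + 2 = 2 * (n + 1)" by simp_all
    then have "x ^ (2 * (n - i)) * y ^ (2 * i + 2) = (x ^ 2) ^ (n - i) * (y ^ 2) ^ (i + 1)"
      "x ^ (2 * n + 2) = (x ^ 2) ^ (n + 1)"
      by (simp_all only: power_mult)
    moreover have "(x ^ 2) ^ (n - i) * (y ^ 2) ^ (i + 1) = (x ^ 2) ^ (n + 1)"
      unfolding True[symmetric] power_add[symmetric] using that by simp
    ultimately show ?thesis by simp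
  qed
  then show ?thesis using True by simp
next
  case False
  define X where "X = 1 / x ^ 2"
  define Y where "Y = 1 / y ^ 2"
  have XY: "X \<noteq> 0" "Y \<noteq> 0" "X \<noteq> Y" using x y False by (auto simp: X_def Y_def)
  have X_pow: "1 / x ^ (2 * k) = X ^ k" and Y_pow: "1 / y ^ (2 * k) = Y ^ k" for k
    by (simp_all add: X_def Y_def power_mult power_one_over)
  have "1 / (x ^ (2 * (n - i)) * y ^ (2 * i + 2)) = X ^ (n - i) * Y ^ (i + 1)" for i
  proof -
    have "2 * i + 2 = 2 * (i + 1)" by simp
    then show ?thesis unfolding X_pow[symmetric] Y_pow[symmetric] by simp
  qed
  then have "(\<Sum>i<n. 1 / (x ^ (2 * (n - i)) * y ^ (2 * i + 2))) = (\<Sum>i<n. X ^ (n - i) * Y ^ (i + 1))"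
    by simp
  also have "\<dots> = X ^ n / (1 / Y - 1 / X) + Y ^ n / (1 / X - 1 / Y)"
    by (rule sum_power_mult_power_eq[OF XY])
  also have "\<dots> = 1 / (x ^ (2 * n) * (y ^ 2 - x ^ 2)) + 1 / (y ^ (2 * n) * (x ^ 2 - y ^ 2))"
    unfolding X_pow[symmetric] Y_pow[symmetric] by (simp add: X_def Y_def)
  finally show ?thesis using False by simp
qed

lemma sum_lessThan_odd_split_parity:
  fixes h :: "nat \<Rightarrow> 'a::comm_monoid_add"
  shows "(\<Sum>k<2 * n + 1. h k) = (\<Sum>m\<le>n. h (2 * m)) + (\<Sum>m<n. h (2 * m + 1))"
  by (induction n) (simp_all add: ac_simps)

section \<open>Unordered sums\<close>

lemma has_sum_diff:
  fixes f g :: "'a \<Rightarrow> 'b::topological_ab_group_add"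
  assumes "(f has_sum a) A" "(g has_sum b) A"
  shows "((\<lambda>x. f x - g x) has_sum (a - b)) A"
proof -
  have "((\<lambda>x. - g x) has_sum - b) A" using assms(2) by (simp add: has_sum_uminus)
  from has_sum_add[OF assms(1) this] show ?thesis by simp
qed

lemma has_sum_sum:
  fixes f :: "'i \<Rightarrow> 'a \<Rightarrow> 'b::topological_comm_monoid_add"
  assumes "finite I" "\<And>i. i \<in> I \<Longrightarrow> (f i has_sum s i) A"
  shows "((\<lambda>x. \<Sum>i\<in>I. f i x) has_sum (\<Sum>i\<in>I. s i)) A"
  using assms by (induction I rule: finite_induct) (auto intro: has_sum_add)

lemma has_sum_mult_nonneg:
  fixes f :: "'a \<Rightarrow> real" and g :: "'b \<Rightarrow> real"
  assumes f: "(f has_sum F) UNIV" and g: "(g has_sum G) UNIV"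
    and "\<And>a. f a \<ge> 0" "\<And>b. g b \<ge> 0"
  shows "((\<lambda>(a, b). f a * g b) has_sum (F * G)) UNIV"
proof -
  have fibre: "((\<lambda>b. (\<lambda>(a, b). f a * g b) (a, b)) has_sum f a * G) UNIV" for a
    using has_sum_cmult_right[OF g] by simp
  have outer: "((\<lambda>a. f a * G) has_sum F * G) UNIV"
    using has_sum_cmult_left[OF f] .
  then have "(\<lambda>(a, b). f a * g b) summable_on UNIV \<times> UNIV"
    using assms(3,4) by (intro summable_on_SigmaI[OF fibre]) (auto simp: summable_on_def)
  with outer have "((\<lambda>(a, b). f a * g b) has_sum (F * G)) (UNIV \<times> UNIV)"
    by (intro has_sum_SigmaI[OF fibre])
  then show ?thesis by simp
qed

lemma telescope_shift_sums:
  fixes g :: "nat \<Rightarrow> 'a::real_normed_vector"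
  assumes "g \<longlonglongrightarrow> 0"
  shows "(\<lambda>n. g n - g (n + m)) sums (\<Sum>i<m. g i)"
proof -
  have "(\<lambda>n. g (n + i) - g (Suc (n + i))) sums g i" for i
    using telescope_sums'[OF LIMSEQ_ignore_initial_segment[OF assms, of i]] by simp
  then have "(\<lambda>n. \<Sum>i<m. g (n + i) - g (Suc (n + i))) sums (\<Sum>i<m. g i)"
    by (rule sums_sum)
  moreover have "(\<Sum>i<m. g (n + i) - g (Suc (n + i))) = g n - g (n + m)" for n
    using sum_lessThan_telescope'[of "\<lambda>i. g (n + i)" m] by simp
  ultimately show ?thesis by simp
qed

section \<open>Double series over odd numbers\<close>

definition odd_num :: "nat \<Rightarrow> real" where
  "odd_num n = 2 * real n + 1"

lemma odd_num_pos [simp]: "odd_num n > 0"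
  by (simp add: odd_num_def add_nonneg_pos)

lemma odd_num_nonneg [simp]: "odd_num n \<ge> 0"
  using odd_num_pos[of n] by linarith

lemma odd_num_neq_0 [simp]: "odd_num n \<noteq> 0"
  using odd_num_pos[of n] by linarith

lemma odd_num_add_pos [simp]: "odd_num m + odd_num n > 0"
  using odd_num_pos[of m] odd_num_pos[of n] by linarith

lemma odd_num_add_neq_0: "odd_num m + odd_num n \<noteq> 0"
  using odd_num_add_pos[of m n] by linarith

lemma odd_num_square_eq_iff: "odd_num m ^ 2 = odd_num n ^ 2 \<longleftrightarrow> m = n"
proof -
  have "odd_num m ^ 2 = odd_num n ^ 2 \<longleftrightarrow> odd_num m = odd_num n"
    by (rule power2_eq_iff_nonneg) (simp_all add: odd_num_def)
  then show ?thesis by (simp add: odd_num_def)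
qed

lemma odd_num_ge_1: "odd_num n \<ge> 1"
  by (simp add: odd_num_def)

lemma dlambda_has_sum:
  assumes s: "s \<ge> 2"
  shows "((\<lambda>n. 1 / odd_num n ^ s) has_sum dlambda (real s)) UNIV"
proof -
  have "summable (\<lambda>n. 1 / odd_num n ^ s)"
  proof (rule summable_comparison_test'[OF inverse_power_summable[of 2, where 'a = real]])
    fix n :: nat assume "n \<ge> 1"
    have "real n ^ 2 \<le> odd_num n ^ 2"
      by (intro power_mono) (auto simp: odd_num_def)
    also have "\<dots> \<le> odd_num n ^ s"
      using s odd_num_ge_1 by (intro power_increasing) auto
    finally show "norm (1 / odd_num n ^ s) \<le> inverse (real n ^ 2)"
      using \<open>n \<ge> 1\<close> by (simp add: divide_simps abs_of_pos)
  qed simp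
  moreover have "dlambda (real s) = (\<Sum>n. 1 / odd_num n ^ s)"
    by (simp add: dlambda_def odd_num_def powr_realpow add_nonneg_pos)
  ultimately show ?thesis
    by (intro sums_nonneg_imp_has_sum) (simp_all add: summable_sums less_imp_le)
qed

lemma dlambda_mult_has_sum:
  assumes "s \<ge> 2" "t \<ge> 2"
  shows "((\<lambda>(a, b). 1 / (odd_num a ^ s * odd_num b ^ t)) has_sum (dlambda (real s) * dlambda (real t))) UNIV"
  using has_sum_mult_nonneg[OF dlambda_has_sum[OF assms(1)] dlambda_has_sum[OF assms(2)]]
  by (simp add: less_imp_le)

lemma summable_on_dominated_by_inverse_squares:
  fixes f :: "nat \<times> nat \<Rightarrow> real"
  assumes "\<And>a b. 0 \<le> f (a, b)" "\<And>a b. f (a, b) \<le> 1 / (odd_num a ^ 2 * odd_num b ^ 2)"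
  shows "f summable_on UNIV"
proof (rule summable_on_comparison_test)
  show "(\<lambda>(a, b). 1 / (odd_num a ^ 2 * odd_num b ^ 2)) summable_on UNIV"
    using dlambda_mult_has_sum[of 2 2] by (auto simp: summable_on_def)
qed (use assms in auto)

lemma Sodd_Suc: "Sodd (Suc n) t = (\<Sum>a\<le>n. 1 / odd_num a ^ t)"
proof -
  have "Sodd (Suc n) t = (\<Sum>k\<in>Suc ` {..n}. 1 / (2 * real k - 1) ^ t)"
    by (simp add: Sodd_def image_Suc_atMost)
  also have "\<dots> = (\<Sum>a\<le>n. 1 / odd_num a ^ t)"
    by (subst sum.reindex) (auto simp: odd_num_def add.commute)
  finally show ?thesis .
qed

lemma odd_power_sum_power_summable:
  assumes s: "s \<ge> 2" and t: "t \<ge> 2"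
  shows "(\<lambda>(a, b). 1 / (odd_num a ^ t * (odd_num a + odd_num b) ^ s)) summable_on UNIV"
proof (rule summable_on_dominated_by_inverse_squares)
  fix a b
  have "odd_num a ^ 2 \<le> odd_num a ^ t" "odd_num b ^ 2 \<le> odd_num b ^ s"
    using s t odd_num_ge_1 by (auto intro: power_increasing)
  moreover have "odd_num b ^ s \<le> (odd_num a + odd_num b) ^ s"
    by (intro power_mono) (auto simp: less_imp_le)
  ultimately have "odd_num a ^ 2 * odd_num b ^ 2 \<le> odd_num a ^ t * (odd_num a + odd_num b) ^ s"
    by (intro mult_mono) (auto simp: less_imp_le)
  then show "(\<lambda>(a, b). 1 / (odd_num a ^ t * (odd_num a + odd_num b) ^ s)) (a, b) \<le> 1 / (odd_num a ^ 2 * odd_num b ^ 2)"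
    unfolding prod.case by (intro divide_left_mono) auto
qed (simp add: less_imp_le)

lemma sigma_odd_has_sum:
  assumes s: "s \<ge> 2" and t: "t \<ge> 2"
  shows "((\<lambda>(a, b). 1 / (odd_num a ^ t * (odd_num a + odd_num b) ^ s)) has_sum (sigma_odd s t / 2 ^ s)) UNIV"
proof -
  define f where "f = (\<lambda>(a, b). 1 / (odd_num a ^ t * (odd_num a + odd_num b) ^ s))"
  obtain S where fS: "(f has_sum S) UNIV"
    using odd_power_sum_power_summable[OF s t] by (auto simp: f_def summable_on_def)
  define h where "h = (\<lambda>(n, a). f (a, n - a))"
  have "(h has_sum S) (SIGMA n:UNIV. {..n})"
    using fS by (subst (asm) has_sum_reindex_bij_witness[where j = "\<lambda>(a, b). (a + b, a)" and i = "\<lambda>(n, a). (a, n - a)"])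
      (auto simp: h_def)
  then have "((\<lambda>n. \<Sum>a\<le>n. h (n, a)) has_sum S) UNIV"
    by (rule has_sum_SigmaD) simp
  moreover have "(\<Sum>a\<le>n. h (n, a)) = Sodd (Suc n) t / real (Suc n) ^ s / 2 ^ s" for n
  proof -
    have "odd_num a + odd_num (n - a) = 2 * real (Suc n)" if "a \<le> n" for a
      using that by (simp add: odd_num_def of_nat_diff)
    then have "(\<Sum>a\<le>n. h (n, a)) = (\<Sum>a\<le>n. 1 / odd_num a ^ t * (1 / (2 * real (Suc n)) ^ s))"
      by (intro sum.cong) (auto simp: h_def f_def)
    also have "\<dots> = Sodd (Suc n) t * (1 / (2 * real (Suc n)) ^ s)"
      by (simp only: Sodd_Suc sum_distrib_right)
    finally show ?thesis
      by (simp add: power_mult_distrib del: of_nat_Suc)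
  qed
  ultimately have "(\<lambda>n. Sodd (Suc n) t / real (Suc n) ^ s / 2 ^ s) sums S"
    by (simp add: has_sum_imp_sums del: of_nat_Suc)
  from sums_mult2[OF this, of "2 ^ s"]
  have "(\<lambda>n. Sodd (Suc n) t / real (Suc n) ^ s) sums (S * 2 ^ s)"
    by simp
  then have "S = sigma_odd s t / 2 ^ s"
    by (simp add: sigma_odd_def sums_iff)
  with fS show ?thesis by (simp add: f_def)
qed

lemma odd_tornheim_has_sum:
  assumes N: "even N" "N \<ge> 2"
  shows "((\<lambda>(a, b). 1 / (odd_num a ^ N * odd_num b * (odd_num a + odd_num b))) has_sum
           (\<Sum>k<N - 1. (-1) ^ k * (dlambda (real (N - k)) * dlambda (real (k + 2)))) / 2) UNIV"
proof -
  define f where "f = (\<lambda>(a, b). 1 / (odd_num a ^ N * odd_num b * (odd_num a + odd_num b)))"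
  have "f summable_on UNIV"
  proof (rule summable_on_dominated_by_inverse_squares)
    fix a b
    show "0 \<le> f (a, b)" by (simp add: f_def less_imp_le)
    have "odd_num a ^ 2 \<le> odd_num a ^ N"
      using N odd_num_ge_1 by (intro power_increasing) auto
    moreover have "odd_num b ^ 2 \<le> odd_num b * (odd_num a + odd_num b)"
      using odd_num_pos[of a] odd_num_pos[of b] by (simp add: power2_eq_square)
    ultimately have "odd_num a ^ 2 * odd_num b ^ 2 \<le> odd_num a ^ N * (odd_num b * (odd_num a + odd_num b))"
      by (intro mult_mono) (auto simp: less_imp_le)
    then show "f (a, b) \<le> 1 / (odd_num a ^ 2 * odd_num b ^ 2)"
      unfolding f_def prod.case mult.assoc by (intro divide_left_mono) auto
  qed
  then obtain S where fS: "(f has_sum S) UNIV" by (auto simp: summable_on_def)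
  then have "((\<lambda>(a, b). f (b, a)) has_sum S) UNIV"
    using has_sum_swap[where f = f and S = S and A = UNIV and B = UNIV] by simp
  with fS have "((\<lambda>ab. f ab + (\<lambda>(a, b). f (b, a)) ab) has_sum (S + S)) UNIV"
    by (rule has_sum_add)
  moreover have "f ab + (\<lambda>(a, b). f (b, a)) ab
      = (\<Sum>k<N - 1. (-1) ^ k * (\<lambda>(a, b). 1 / (odd_num a ^ (N - k) * odd_num b ^ (k + 2))) ab)" for ab
    using partial_fractions_symmetric[OF odd_num_neq_0 odd_num_neq_0 odd_num_add_neq_0 N, of "fst ab" "snd ab"]
    by (cases ab) (simp add: f_def add.commute)
  moreover have "((\<lambda>ab. \<Sum>k<N - 1. (-1) ^ k * (\<lambda>(a, b). 1 / (odd_num a ^ (N - k) * odd_num b ^ (k + 2))) ab)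
      has_sum (\<Sum>k<N - 1. (-1) ^ k * (dlambda (real (N - k)) * dlambda (real (k + 2))))) UNIV"
    by (intro has_sum_sum has_sum_cmult_right dlambda_mult_has_sum) auto
  ultimately have "S + S = (\<Sum>k<N - 1. (-1) ^ k * (dlambda (real (N - k)) * dlambda (real (k + 2))))"
    using has_sum_unique by fastforce
  then have "S = (\<Sum>k<N - 1. (-1) ^ k * (dlambda (real (N - k)) * dlambda (real (k + 2)))) / 2"
    by simp
  with fS show ?thesis unfolding f_def by simp
qed

lemma odd_double_series_identity:
  assumes p: "even p" "p \<ge> 2" and q: "even q" "q \<ge> 2"
  shows "(\<Sum>i=1..q-2. of_nat ((p - 1 + i) choose i) * (sigma_odd (q - i) (p + i) / 2 ^ (q - i)))
       + (\<Sum>j=0..p-2. (-1) ^ j * of_nat ((q - 1 + j) choose j) * (dlambda (real (q + j)) * dlambda (real (p - j))))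
       = of_nat ((p + q - 2) choose (q - 1))
         * ((\<Sum>k<p + q - 3. (-1) ^ k * (dlambda (real (p + q - 2 - k)) * dlambda (real (k + 2)))) / 2)"
    (is "?S + ?T = _")
proof -
  define N where "N = p + q - 2"
  have N: "even N" "N \<ge> 2" "N - 1 = p + q - 3" using p q by (auto simp: N_def)
  define F where "F = (\<lambda>(a, b). 1 / (odd_num a ^ p * (odd_num a + odd_num b) ^ q))"
  define G where "G i = (\<lambda>(a, b). 1 / (odd_num a ^ (p + i) * (odd_num a + odd_num b) ^ (q - i)))" for i
  define H where "H j = (\<lambda>(a, b). 1 / (odd_num a ^ (q + j) * odd_num b ^ (p - j)))" for j
  define E where "E = (\<lambda>(a, b). 1 / (odd_num a ^ N * odd_num b * (odd_num a + odd_num b)))"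
  have F_sum: "(F has_sum sigma_odd q p / 2 ^ q) UNIV"
    unfolding F_def by (rule sigma_odd_has_sum[OF q(2) p(2)])
  then have "((\<lambda>(a, b). F (b, a)) has_sum sigma_odd q p / 2 ^ q) UNIV"
    using has_sum_swap[where f = F and A = UNIV and B = UNIV] by simp
  from has_sum_diff[OF this F_sum] have "((\<lambda>ab. (\<lambda>(a, b). F (b, a)) ab - F ab) has_sum 0) UNIV"
    by simp
  moreover have "(\<lambda>(a, b). F (b, a)) ab - F ab
      = (\<Sum>i=1..q-2. of_nat ((p - 1 + i) choose i) * G i ab)
      + (\<Sum>j=0..p-2. (-1) ^ j * of_nat ((q - 1 + j) choose j) * H j ab)
      - of_nat (N choose (q - 1)) * E ab" for ab
    using partial_fractions_even_power[of "odd_num (fst ab)" "odd_num (snd ab)" p q] p q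
    by (cases ab) (simp add: F_def G_def H_def E_def N_def odd_num_add_neq_0 add.commute)
  moreover have "((\<lambda>ab. (\<Sum>i=1..q-2. of_nat ((p - 1 + i) choose i) * G i ab)
      + (\<Sum>j=0..p-2. (-1) ^ j * of_nat ((q - 1 + j) choose j) * H j ab)
      - of_nat (N choose (q - 1)) * E ab)
    has_sum ?S + ?T - of_nat (N choose (q - 1))
      * ((\<Sum>k<N - 1. (-1) ^ k * (dlambda (real (N - k)) * dlambda (real (k + 2)))) / 2)) UNIV"
    unfolding G_def H_def E_def using p q
    by (intro has_sum_diff has_sum_add has_sum_sum has_sum_cmult_right sigma_odd_has_sum
        dlambda_mult_has_sum odd_tornheim_has_sum N(1,2)) auto
  ultimately show ?thesis
    using has_sum_unique N(3) by (fastforce simp: N_def)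
qed

lemma odd_double_series_identity_weighted:
  assumes p: "even p" "p \<ge> 2" and q: "even q" "q \<ge> 2"
  shows "(\<Sum>i=1..q-2. 2 ^ (i - 1) * real ((p + i - 1) choose i) * sigma_odd (q - i) (p + i))
       + 2 ^ (q - 1) * (\<Sum>j=0..p-2. (-1) ^ j * real ((q + j - 1) choose j)
           * dlambda (real (q + j)) * dlambda (real (p - j)))
       = 2 ^ (q - 2) * real ((p + q - 2) choose (q - 1))
         * (\<Sum>k<p + q - 3. (-1) ^ k * (dlambda (real (p + q - 2 - k)) * dlambda (real (k + 2))))"
    (is "?lhs = 2 ^ (q - 2) * ?C * ?A")
proof -
  define S where "S = (\<Sum>i=1..q-2. real ((p - 1 + i) choose i) * (sigma_odd (q - i) (p + i) / 2 ^ (q - i)))"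
  define T where "T = (\<Sum>j=0..p-2. (-1) ^ j * real ((q - 1 + j) choose j) * (dlambda (real (q + j)) * dlambda (real (p - j))))"
  have "(\<Sum>i=1..q-2. 2 ^ (i - 1) * real ((p + i - 1) choose i) * sigma_odd (q - i) (p + i)) = 2 ^ (q - 1) * S"
    unfolding S_def sum_distrib_left
  proof (intro sum.cong refl)
    fix i assume "i \<in> {1..q - 2}"
    then have "q - 1 = (i - 1) + (q - i)" "p + i - 1 = p - 1 + i" using p q by auto
    then show "2 ^ (i - 1) * real ((p + i - 1) choose i) * sigma_odd (q - i) (p + i)
        = 2 ^ (q - 1) * (real ((p - 1 + i) choose i) * (sigma_odd (q - i) (p + i) / 2 ^ (q - i)))"
      by (simp add: power_add)
  qed
  moreover have "(\<Sum>j=0..p-2. (-1) ^ j * real ((q + j - 1) choose j) * dlambda (real (q + j)) * dlambda (real (p - j))) = T"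
    unfolding T_def using q by (intro sum.cong) (auto simp: mult.assoc)
  ultimately have "?lhs = 2 ^ (q - 1) * (S + T)"
    by (simp add: distrib_left)
  also have "S + T = ?C * (?A / 2)"
    unfolding S_def T_def by (rule odd_double_series_identity[OF p q])
  also have "2 ^ (q - 1) * (?C * (?A / 2)) = 2 ^ (q - 2) * ?C * ?A"
  proof -
    have "q - 1 = Suc (q - 2)" using q by simp
    then show ?thesis by simp
  qed
  finally show ?thesis .
qed

section \<open>Convolutions of even lambda values\<close>

text \<open>The summand for \<open>n = a\<close> is \<open>1 / 0 = 0\<close>, so this is the sum over \<open>n \<noteq> a\<close>.\<close>

lemma inverse_odd_square_diff_sums:
  "(\<lambda>n. 1 / (odd_num n ^ 2 - odd_num a ^ 2)) sums (1 / (4 * odd_num a ^ 2))"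
proof -
  define m where "m = 2 * a + 1"
  define g where "g n = 1 / (real n - real a)" for n :: nat
  have "g \<longlonglongrightarrow> 0"
  proof (rule LIMSEQ_offset[where k = "a + 1"])
    have "(\<lambda>n. g (n + (a + 1))) = (\<lambda>n. inverse (real (Suc n)))"
      by (auto simp: g_def divide_inverse)
    then show "(\<lambda>n. g (n + (a + 1))) \<longlonglongrightarrow> 0"
      using LIMSEQ_inverse_real_of_nat by simp
  qed
  moreover have "(\<Sum>i<m. g i) = 0"
  proof -
    have "(\<Sum>i<m. g i) = (\<Sum>i<m. g (2 * a - i))"
      by (rule sum.reindex_bij_witness[where i = "\<lambda>i. 2 * a - i" and j = "\<lambda>i. 2 * a - i"])
         (auto simp: m_def)
    also have "\<dots> = - (\<Sum>i<m. g i)"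
      by (subst sum_negf[symmetric], rule sum.cong) (auto simp: m_def g_def of_nat_diff divide_simps)
    finally show ?thesis by simp
  qed
  ultimately have tel: "(\<lambda>n. (g n - g (n + m)) / (4 * real m)) sums 0"
    using sums_divide[OF telescope_shift_sums, of g m "4 * real m"] by simp
  have "1 / (odd_num n ^ 2 - odd_num a ^ 2)
      = (g n - g (n + m)) / (4 * real m) + (if n = a then 1 / (4 * odd_num a ^ 2) else 0)" for n
  proof (cases "n = a")
    case True
    then show ?thesis by (simp add: g_def m_def odd_num_def power2_eq_square field_simps)
  next
    case False
    then have nz: "real n - real a \<noteq> 0" "real n + real a + 1 \<noteq> 0" "real n + real a + 1 \<noteq> real n - real a"
      by simp_all
    have "(1 / r - 1 / t) / (4 * (t - r)) = 1 / (4 * r * t)"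
      if "r \<noteq> 0" "t \<noteq> 0" "t \<noteq> r" for r t :: real
      using that by (simp add: field_simps)
    from this[OF nz]
    have "(g n - g (n + m)) / (4 * real m) = 1 / (4 * (real n - real a) * (real n + real a + 1))"
      by (simp add: g_def m_def algebra_simps)
    moreover have "odd_num n ^ 2 - odd_num a ^ 2 = 4 * (real n - real a) * (real n + real a + 1)"
      by (simp add: odd_num_def power2_eq_square algebra_simps)
    ultimately show ?thesis
      using False by simp
  qed
  then show ?thesis
    using sums_add[OF tel sums_single[of a "\<lambda>_. 1 / (4 * odd_num a ^ 2)"]] by simp
qed

lemma inverse_odd_square_diff_summable_norm:
  "summable (\<lambda>n. norm (1 / (odd_num n ^ 2 - odd_num a ^ 2)))"
proof (rule summable_comparison_test'[OF summable_mult[OF inverse_power_summable[of 2, where 'a = real], of 2]])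
  fix n :: nat assume n: "n \<ge> 2 * a + 1"
  have "2 * odd_num a \<le> odd_num n" using n by (simp add: odd_num_def)
  then have "4 * odd_num a ^ 2 \<le> odd_num n ^ 2"
    using power_mono[of "2 * odd_num a" "odd_num n" 2] by (simp add: power_mult_distrib)
  moreover have "real n ^ 2 \<le> odd_num n ^ 2"
    by (intro power_mono) (auto simp: odd_num_def)
  ultimately have le: "real n ^ 2 / 2 \<le> odd_num n ^ 2 - odd_num a ^ 2"
    using zero_le_power2[of "real n"] by linarith
  have pos: "real n ^ 2 / 2 > 0" using n by simp
  have dpos: "odd_num n ^ 2 - odd_num a ^ 2 > 0" using le pos by linarith
  then have "norm (norm (1 / (odd_num n ^ 2 - odd_num a ^ 2))) = 1 / (odd_num n ^ 2 - odd_num a ^ 2)"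
    by simp
  also have "\<dots> \<le> 1 / (real n ^ 2 / 2)"
    by (rule divide_left_mono[OF le _ mult_pos_pos[OF dpos pos]]) simp
  finally show "norm (norm (1 / (odd_num n ^ 2 - odd_num a ^ 2))) \<le> 2 * inverse (real n ^ 2)"
    by (simp add: field_simps)
qed simp

lemma inverse_odd_square_diff_has_sum:
  "((\<lambda>n. 1 / (odd_num n ^ 2 - odd_num a ^ 2)) has_sum 1 / (4 * odd_num a ^ 2)) UNIV"
  using inverse_odd_square_diff_summable_norm inverse_odd_square_diff_sums
  by (intro norm_summable_imp_has_sum) (simp_all add: sums_iff)

lemma odd_square_diff_bound:
  assumes n: "n \<ge> 1"
  shows "\<bar>1 / (odd_num a ^ (2 * n) * (odd_num b ^ 2 - odd_num a ^ 2))\<bar>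
       \<le> 2 / (odd_num a ^ 2 * odd_num b ^ 2) + (if b \<le> 2 * a then 1 / odd_num a ^ 3 else 0)"
proof -
  define x where "x = odd_num a"
  define y where "y = odd_num b"
  have x: "x \<ge> 1" and y: "y \<ge> 1" by (simp_all add: x_def y_def odd_num_ge_1)
  have x_pow: "x ^ 2 \<le> x ^ (2 * n)" using x n by (intro power_increasing) auto
  consider "a = b" | "a \<noteq> b" "b \<le> 2 * a" | "b > 2 * a" by linarith
  then show ?thesis
  proof cases
    case 1
    then show ?thesis by simp
  next
    case 2
    then have "\<bar>y - x\<bar> \<ge> 1" by (auto simp: x_def y_def odd_num_def)
    moreover have "y ^ 2 - x ^ 2 = (y - x) * (y + x)"
      by (simp add: power2_eq_square algebra_simps)
    ultimately have "\<bar>y ^ 2 - x ^ 2\<bar> \<ge> 1 * x"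
      using x y by (simp only: abs_mult) (intro mult_mono, auto)
    then have "x ^ 2 * x \<le> x ^ (2 * n) * \<bar>y ^ 2 - x ^ 2\<bar>"
      using x_pow x by (intro mult_mono) auto
    moreover have pos: "0 < x ^ 2 * x" using x by simp
    ultimately have "1 / (x ^ (2 * n) * \<bar>y ^ 2 - x ^ 2\<bar>) \<le> 1 / (x ^ 2 * x)"
      by (intro divide_left_mono) (auto intro!: mult_pos_pos)
    then have "\<bar>1 / (x ^ (2 * n) * (y ^ 2 - x ^ 2))\<bar> \<le> 1 / x ^ 3"
      using x by (simp add: abs_mult power3_eq_cube power2_eq_square)
    then show ?thesis
      using 2 by (simp add: x_def y_def add_increasing)
  next
    case 3
    then have "y \<ge> 2 * x" by (simp add: x_def y_def odd_num_def)
    then have "y ^ 2 \<ge> 4 * x ^ 2"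
      using x power_mono[of "2 * x" y 2] by (simp add: power_mult_distrib)
    then have diff: "y ^ 2 - x ^ 2 \<ge> y ^ 2 / 2" using zero_le_power2[of x] by linarith
    then have le: "x ^ 2 * (y ^ 2 / 2) \<le> x ^ (2 * n) * (y ^ 2 - x ^ 2)"
      using x_pow y by (intro mult_mono) auto
    have "y ^ 2 > 0" using y by simp
    then have gap: "y ^ 2 - x ^ 2 > 0" using diff by linarith
    then have "\<bar>1 / (x ^ (2 * n) * (y ^ 2 - x ^ 2))\<bar> = 1 / (x ^ (2 * n) * (y ^ 2 - x ^ 2))"
      using x by simp
    also have "\<dots> \<le> 1 / (x ^ 2 * (y ^ 2 / 2))"
      using x y gap by (intro divide_left_mono[OF le]) (auto intro!: mult_pos_pos)
    finally have "\<bar>1 / (x ^ (2 * n) * (y ^ 2 - x ^ 2))\<bar> \<le> 2 / (x ^ 2 * y ^ 2)"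
      by simp
    then show ?thesis using 3 by (simp add: x_def y_def)
  qed
qed

lemma odd_square_diff_summable:
  assumes n: "n \<ge> 1"
  shows "(\<lambda>(a, b). 1 / (odd_num a ^ (2 * n) * (odd_num b ^ 2 - odd_num a ^ 2))) summable_on UNIV"
proof -
  define near where "near = (\<lambda>(a, b). if b \<le> 2 * a then 1 / odd_num a ^ 3 else 0)"
  have "(\<lambda>(a, b). 1 / (odd_num a ^ 2 * odd_num b ^ 2)) summable_on UNIV"
    using dlambda_mult_has_sum[of 2 2] by (auto simp: summable_on_def)
  then have far: "(\<lambda>ab. 2 * (\<lambda>(a, b). 1 / (odd_num a ^ 2 * odd_num b ^ 2)) ab) summable_on UNIV"
    by (rule summable_on_cmult_right)
  have fibre: "((\<lambda>b. near (a, b)) has_sum 1 / odd_num a ^ 2) UNIV" for a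
  proof -
    have "(\<Sum>b\<le>2 * a. 1 / odd_num a ^ 3) = odd_num a * (1 / odd_num a ^ 3)"
      by (simp add: odd_num_def)
    also have "\<dots> = 1 / odd_num a ^ 2"
      by (simp add: power3_eq_cube power2_eq_square)
    finally have "(\<Sum>b\<le>2 * a. 1 / odd_num a ^ 3) = 1 / odd_num a ^ 2" .
    then have "((\<lambda>b. 1 / odd_num a ^ 3) has_sum 1 / odd_num a ^ 2) {..2 * a}"
      by (intro has_sum_finiteI) auto
    then show ?thesis
      by (subst has_sum_cong_neutral[where T = "{..2 * a}"]) (auto simp: near_def)
  qed
  have "(\<lambda>a. 1 / odd_num a ^ 2) summable_on UNIV"
    using dlambda_has_sum[of 2] by (auto simp: summable_on_def)
  then have "near summable_on UNIV \<times> UNIV"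
    by (intro summable_on_SigmaI[OF fibre]) (auto simp: near_def)
  with far have "(\<lambda>ab. 2 * (\<lambda>(a, b). 1 / (odd_num a ^ 2 * odd_num b ^ 2)) ab + near ab) summable_on UNIV"
    by (intro summable_on_add) simp_all
  then have "(\<lambda>(a, b). \<bar>1 / (odd_num a ^ (2 * n) * (odd_num b ^ 2 - odd_num a ^ 2))\<bar>) summable_on UNIV"
    by (rule summable_on_comparison_test) (use odd_square_diff_bound[OF n] in \<open>auto simp: near_def\<close>)
  then show ?thesis
    by (subst summable_on_iff_abs_summable_on_real) (simp add: case_prod_unfold)
qed

lemma dlambda_even_convolution:
  assumes n: "n \<ge> 1"
  shows "(\<Sum>i<n. dlambda (real (2 * (n - i))) * dlambda (real (2 * i + 2)))
       = (2 * real n + 1) / 2 * dlambda (real (2 * n + 2))"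
proof -
  define L where "L = dlambda (real (2 * n + 2))"
  define A where "A = (\<lambda>(a, b). 1 / (odd_num a ^ (2 * n) * (odd_num b ^ 2 - odd_num a ^ 2)))"
  define D where "D = (\<lambda>(a, b). if a = b then real n / odd_num a ^ (2 * n + 2) else 0)"
  have "((\<lambda>b. A (a, b)) has_sum 1 / odd_num a ^ (2 * n) * (1 / (4 * odd_num a ^ 2))) UNIV" for a
    using has_sum_cmult_right[OF inverse_odd_square_diff_has_sum[of a], of "1 / odd_num a ^ (2 * n)"]
    by (simp add: A_def)
  moreover have "((\<lambda>a. 1 / odd_num a ^ (2 * n) * (1 / (4 * odd_num a ^ 2))) has_sum L / 4) UNIV"
    using has_sum_cmult_right[OF dlambda_has_sum[of "2 * n + 2"], of "1 / 4"]
    by (simp add: L_def power_add power2_eq_square mult_ac)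
  ultimately have "(A has_sum L / 4) (UNIV \<times> UNIV)"
    using odd_square_diff_summable[OF n] unfolding A_def by (intro has_sum_SigmaI) auto
  then have A_sum: "(A has_sum L / 4) UNIV" and A_swap_sum: "((\<lambda>(a, b). A (b, a)) has_sum L / 4) UNIV"
    using has_sum_swap[where f = A and A = UNIV and B = UNIV] by auto
  have "(D has_sum real n * L) UNIV"
  proof -
    have "((\<lambda>a. real n * (1 / odd_num a ^ (2 * n + 2))) has_sum real n * L) UNIV"
      unfolding L_def by (rule has_sum_cmult_right[OF dlambda_has_sum]) simp
    then have "(D has_sum real n * L) (range (\<lambda>a. (a, a)))"
      by (subst has_sum_reindex) (auto simp: inj_on_def D_def o_def)
    then show ?thesis
      by (rule has_sum_cong_neutral[THEN iffD1, rotated -1]) (auto simp: D_def)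
  qed
  with A_sum A_swap_sum have "((\<lambda>ab. A ab + (\<lambda>(a, b). A (b, a)) ab + D ab) has_sum L / 4 + L / 4 + real n * L) UNIV"
    by (intro has_sum_add)
  moreover have "(\<Sum>i<n. (\<lambda>(a, b). 1 / (odd_num a ^ (2 * (n - i)) * odd_num b ^ (2 * i + 2))) (a, b))
      = A (a, b) + (\<lambda>(a, b). A (b, a)) (a, b) + D (a, b)" for a b
    using sum_inverse_square_powers[OF odd_num_neq_0 odd_num_neq_0, of a n b]
    unfolding A_def D_def odd_num_square_eq_iff prod.case .
  moreover have "((\<lambda>ab. \<Sum>i<n. (\<lambda>(a, b). 1 / (odd_num a ^ (2 * (n - i)) * odd_num b ^ (2 * i + 2))) ab)
      has_sum (\<Sum>i<n. dlambda (real (2 * (n - i))) * dlambda (real (2 * i + 2)))) UNIV"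
    by (intro has_sum_sum dlambda_mult_has_sum) auto
  ultimately have "(\<Sum>i<n. dlambda (real (2 * (n - i))) * dlambda (real (2 * i + 2))) = L / 4 + L / 4 + real n * L"
    using has_sum_unique by (simp add: case_prod_unfold)
  then show ?thesis by (simp add: L_def field_simps)
qed

lemma dlambda_alternating_convolution:
  assumes K: "K \<ge> 1"
  shows "(\<Sum>k<2 * K - 1. (-1) ^ k * (dlambda (real (2 * K - k)) * dlambda (real (k + 2))))
       = (2 * real K + 1) / 2 * dlambda (real (2 * K + 2))
         - (\<Sum>j=1..K-1. dlambda (real (2 * j + 1)) * dlambda (real (2 * K - 2 * j + 1)))"
proof -
  define h where "h k = (-1) ^ k * (dlambda (real (2 * K - k)) * dlambda (real (k + 2)))" for k
  have "2 * K - 1 = 2 * (K - 1) + 1" using K by simp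
  then have "(\<Sum>k<2 * K - 1. h k) = (\<Sum>m\<le>K - 1. h (2 * m)) + (\<Sum>m<K - 1. h (2 * m + 1))"
    by (simp only: sum_lessThan_odd_split_parity)
  also have "(\<Sum>m\<le>K - 1. h (2 * m)) = (\<Sum>i<K. dlambda (real (2 * (K - i))) * dlambda (real (2 * i + 2)))"
    using K by (intro sum.cong) (auto simp: h_def right_diff_distrib')
  also have "\<dots> = (2 * real K + 1) / 2 * dlambda (real (2 * K + 2))"
    by (rule dlambda_even_convolution[OF K])
  also have "(\<Sum>m<K - 1. h (2 * m + 1)) = - (\<Sum>j=1..K-1. dlambda (real (2 * j + 1)) * dlambda (real (2 * K - 2 * j + 1)))"
    unfolding One_nat_def sum.atLeast1_atMost_eq sum_negf[symmetric]
    by (intro sum.cong) (auto simp: h_def algebra_simps Suc_diff_Suc numeral_3_eq_3)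
  finally show ?thesis by (simp add: h_def)
qed

theorem mainTheorem12:
  fixes v r :: nat
  assumes "v \<ge> 1" and "r \<ge> 1"
  shows "(\<Sum>i=1..2 * v-2. 2 ^ (i-1) * real ((2 * r+i-1) choose i) * sigma_odd (2 * v-i) (2 * r+i))
       + 2 ^ (2 * v-1) * (\<Sum>j=0..2 * r-2. (-1) ^ j * real ((2 * v+j-1) choose j)
             * dlambda (real (2 * v+j)) * dlambda (real (2 * r-j)))
       - (2::real) powi (2 * int v - 3) * real ((2 * v+2 * r-2) choose (2 * v-1)) * real (2 * v+2 * r-1)
             * dlambda (real (2 * v+2 * r))
       + 2 ^ (2 * v-2) * real ((2 * v+2 * r-2) choose (2 * v-1))
             * (\<Sum>j=1..r+v-2. dlambda (real (2 * j+1)) * dlambda (real (2 * r+2 * v-2 * j-1)))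
       = 0"
proof -
  define K where "K = r + v - 1"
  have K: "K \<ge> 1" "2 * r + 2 * v - 2 = 2 * K" "2 * r + 2 * v - 3 = 2 * K - 1" "2 * v + 2 * r - 2 = 2 * K"
    "2 * v + 2 * r = 2 * K + 2" "real (2 * v + 2 * r - 1) = 2 * real K + 1" "r + v - 2 = K - 1"
    using assms by (auto simp: K_def)
  define U where "U = (\<Sum>j=1..K-1. dlambda (real (2 * j + 1)) * dlambda (real (2 * K - 2 * j + 1)))"
  have "even (2 * r)" "2 * r \<ge> 2" "even (2 * v)" "2 * v \<ge> 2" using assms by auto
  note weighted = odd_double_series_identity_weighted[OF this]
  have alternating: "(\<Sum>k<2 * r + 2 * v - 3. (-1) ^ k * (dlambda (real (2 * r + 2 * v - 2 - k)) * dlambda (real (k + 2))))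
     = (2 * real K + 1) / 2 * dlambda (real (2 * K + 2)) - U"
    unfolding K(2,3) U_def by (rule dlambda_alternating_convolution[OF K(1)])
  have odd_sum: "(\<Sum>j=1..r+v-2. dlambda (real (2 * j+1)) * dlambda (real (2 * r+2 * v-2 * j-1))) = U"
    unfolding K(7) U_def
  proof (intro sum.cong refl)
    fix j assume "j \<in> {1..K - 1}"
    then have "2 * r + 2 * v - 2 * j - 1 = 2 * K - 2 * j + 1" using assms by (auto simp: K_def)
    then show "dlambda (real (2 * j + 1)) * dlambda (real (2 * r + 2 * v - 2 * j - 1))
        = dlambda (real (2 * j + 1)) * dlambda (real (2 * K - 2 * j + 1))" by simp
  qed
  have "2 * int v - 3 = int (2 * v - 2) - 1" using assms by simp
  then have "(2::real) powi (2 * int v - 3) = 2 powi int (2 * v - 2) / 2 powi 1"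
    by (simp only: power_int_diff[of 2] zero_neq_numeral[symmetric] simp_thms)
  then have powi: "(2::real) powi (2 * int v - 3) = 2 ^ (2 * v - 2) / 2"
    by (simp add: power_int_of_nat)
  show ?thesis
    unfolding weighted alternating odd_sum powi unfolding K(2,4,5,6) by (simp add: field_simps)
qed

end
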